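(* Let $X$ be a Hausdorff hereditarily disconnected space. If $\mathcal{C}\subset\mathcal{K}(X)$ is connected and there exists $T\in\mathcal{C}$ that is scattered, then $|\mathcal{C}|=1$.
   Context: $\mathcal{K}(X)$ is the set of nonempty compact subsets of $X$ with the Vietoris topology (generated by $U^+=\{A: A\subset U\}$ and $U^-=\{A: A\cap U\neq\emptyset\}$ for $U$ open in $X$). A space is hereditarily disconnected if every nonempty connected subset is a singleton. A space is scattered if every nonempty subset has an isolated point (in its relative topology). *)

theory Defs
  imports "HOL-Analysis.Analysis"
begin

definition hyperspace_K :: "'a topology \<Rightarrow> 'a set set" where
  "hyperspace_K X = {A. A \<noteq> {} \<and> compactin X A}"

definition vietoris_upper :: "'a topology \<Rightarrow> 'a set \<Rightarrow> 'a set set" where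
  "vietoris_upper X U = {A \<in> hyperspace_K X. A \<subseteq> U}"

definition vietoris_lower :: "'a topology \<Rightarrow> 'a set \<Rightarrow> 'a set set" where
  "vietoris_lower X U = {A \<in> hyperspace_K X. A \<inter> U \<noteq> {}}"

definition vietoris :: "'a topology \<Rightarrow> 'a set topology" where
  "vietoris X = topology_generated_by
     ({vietoris_upper X U | U. openin X U} \<union> {vietoris_lower X U | U. openin X U})"

definition hereditarily_disconnected :: "'a topology \<Rightarrow> bool" where
  "hereditarily_disconnected X \<longleftrightarrow>
     (\<forall>S. S \<subseteq> topspace X \<and> S \<noteq> {} \<and> connectedin X S \<longrightarrow> (\<exists>x. S = {x}))"

definition scattered_in :: "'a topology \<Rightarrow> 'a set \<Rightarrow> bool" where
  "scattered_in X T \<longleftrightarrow> T \<subseteq> topspace X \<and>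
     (\<forall>S. S \<subseteq> T \<and> S \<noteq> {} \<longrightarrow> (\<exists>x\<in>S. openin (subtopology X S) {x}))"

end

theory Submission
  imports Defs
begin

text \<open>
  Call a compact set K rigid if the only connected family of compacta that contains K and
  consists of supersets of K is {K}. If \<open>\<C>\<close> is connected and contains a scattered T, the
  continuous map \<open>A \<mapsto> A \<union> T\<close> sends \<open>\<C>\<close> to a connected family of supersets of T, so
  rigidity of T forces \<open>A \<subseteq> T\<close> for every \<open>A \<in> \<C>\<close>; since A is then scattered as well,
  also \<open>T \<subseteq> A\<close>.

  Rigidity of scattered compacta comes from an induction that peels off finite sets: if every
  nonempty compact piece of K avoiding a finite set F is rigid, then so is K. Given a connected
  family \<open>\<C>\<close> of supersets of K, let the excess R be the closure of \<open>\<Union>\<C> - K\<close> in \<open>\<Union>\<C>\<close>. By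
  connectedness every nonempty clopen piece D of R meets K, and being relatively open it also
  contains points outside K. If D missed F, the connected family \<open>{A \<inter> D | A \<in> \<C>}\<close> would
  contain the rigid set \<open>K \<inter> D\<close> as its least element, so \<open>A \<inter> D = K \<inter> D\<close> for all A, a
  contradiction. Hence every nonempty clopen subset of R meets the finite set F, and
  hereditary disconnectedness then produces an isolated point of R, which would have to lie
  both in K and outside K.
\<close>

section \<open>The Vietoris topology\<close>

lemma topspace_vietoris [simp]: "topspace (vietoris X) = hyperspace_K X"
proof -
  have "vietoris_upper X (topspace X) = hyperspace_K X"
    by (auto simp: vietoris_upper_def hyperspace_K_def dest: compactin_subset_topspace)
  then show ?thesis
    unfolding vietoris_def topology_generated_by_topspace
    by (auto simp: vietoris_upper_def vietoris_lower_def)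
qed

lemma openin_vietoris_upper: "openin X U \<Longrightarrow> openin (vietoris X) (vietoris_upper X U)"
  unfolding vietoris_def by (rule topology_generated_by_Basis) blast

lemma openin_vietoris_lower: "openin X U \<Longrightarrow> openin (vietoris X) (vietoris_lower X U)"
  unfolding vietoris_def by (rule topology_generated_by_Basis) blast

lemma continuous_map_into_vietoris:
  assumes into: "\<And>y. y \<in> topspace Y \<Longrightarrow> f y \<in> hyperspace_K X"
    and upper: "\<And>U. openin X U \<Longrightarrow> openin Y {y \<in> topspace Y. f y \<subseteq> U}"
    and lower: "\<And>U. openin X U \<Longrightarrow> openin Y {y \<in> topspace Y. f y \<inter> U \<noteq> {}}"
  shows "continuous_map Y (vietoris X) f"
  unfolding vietoris_def
proof (rule continuous_on_generated_topo)
  fix V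
  assume "V \<in> {vietoris_upper X U | U. openin X U} \<union> {vietoris_lower X U | U. openin X U}"
  then obtain U where U: "openin X U" and "V = vietoris_upper X U \<or> V = vietoris_lower X U"
    by blast
  from this(2) show "openin Y (f -` V \<inter> topspace Y)"
  proof
    assume "V = vietoris_upper X U"
    then have "f -` V \<inter> topspace Y = {y \<in> topspace Y. f y \<subseteq> U}"
      using into by (auto simp: vietoris_upper_def)
    with upper[OF U] show ?thesis
      by simp
  next
    assume "V = vietoris_lower X U"
    then have "f -` V \<inter> topspace Y = {y \<in> topspace Y. f y \<inter> U \<noteq> {}}"
      using into by (auto simp: vietoris_lower_def)
    with lower[OF U] show ?thesis
      by simp
  qed
next
  have "f ` topspace Y \<subseteq> vietoris_upper X (topspace X)"
    using into by (auto simp: vietoris_upper_def hyperspace_K_def dest: compactin_subset_topspace)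
  then show "f ` topspace Y \<subseteq>
      \<Union> ({vietoris_upper X U | U. openin X U} \<union> {vietoris_lower X U | U. openin X U})"
    by blast
qed

lemma continuous_map_vietoris_Un:
  assumes "compactin X T"
  shows "continuous_map (vietoris X) (vietoris X) (\<lambda>A. A \<union> T)"
proof (rule continuous_map_into_vietoris)
  fix U assume U: "openin X U"
  have "{A \<in> hyperspace_K X. A \<union> T \<subseteq> U} = (if T \<subseteq> U then vietoris_upper X U else {})"
    by (auto simp: vietoris_upper_def)
  then show "openin (vietoris X) {A \<in> topspace (vietoris X). A \<union> T \<subseteq> U}"
    using openin_vietoris_upper[OF U] by simp
  have "{A \<in> hyperspace_K X. (A \<union> T) \<inter> U \<noteq> {}} =
        (if T \<inter> U = {} then vietoris_lower X U else hyperspace_K X)"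
    by (auto simp: vietoris_lower_def)
  then show "openin (vietoris X) {A \<in> topspace (vietoris X). (A \<union> T) \<inter> U \<noteq> {}}"
    using openin_vietoris_lower[OF U] openin_topspace[of "vietoris X"] by simp
next
  show "A \<union> T \<in> hyperspace_K X" if "A \<in> topspace (vietoris X)" for A
    using that assms by (simp add: hyperspace_K_def compactin_Un)
qed

lemma compactin_Diff_openin:
  assumes "compactin X K" "openin X U"
  shows "compactin X (K - U)"
proof -
  have "K - U = K \<inter> (topspace X - U)"
    using compactin_subset_topspace[OF assms(1)] by blast
  then show ?thesis
    using compact_Int_closedin[OF assms(1)] assms(2) by (simp add: closedin_diff)
qed

lemma compactin_split_Un:
  assumes "Hausdorff_space X" "compactin X K" "openin X U1" "openin X U2" "K \<subseteq> U1 \<union> U2"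
  obtains K1 K2 where "compactin X K1" "compactin X K2" "K1 \<subseteq> U1" "K2 \<subseteq> U2" "K = K1 \<union> K2"
proof -
  have "compactin X (K - U2)" "compactin X (K - U1)"
    using assms(2-4) by (simp_all add: compactin_Diff_openin)
  moreover have "disjnt (K - U2) (K - U1)"
    using assms(5) by (auto simp: disjnt_def)
  ultimately obtain V1 V2 where V: "openin X V1" "openin X V2" "K - U2 \<subseteq> V1" "K - U1 \<subseteq> V2"
      "disjnt V1 V2"
    using assms(1) by (meson Hausdorff_space_compact_sets)
  show ?thesis
  proof (rule that)
    show "compactin X (K - V2)" "compactin X (K - V1)"
      using assms(2) V(1,2) by (simp_all add: compactin_Diff_openin)
    show "K - V2 \<subseteq> U1" "K - V1 \<subseteq> U2"
      using V(3,4) by blast+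
    show "K = (K - V2) \<union> (K - V1)"
      using V(5) by (auto simp: disjnt_def)
  qed
qed

lemma compactin_split_finite_open_cover:
  assumes "Hausdorff_space X" "finite \<U>" "\<And>U. U \<in> \<U> \<Longrightarrow> openin X U"
    and "compactin X K" "K \<subseteq> \<Union>\<U>"
  obtains \<K> where "finite \<K>" "\<And>L. L \<in> \<K> \<Longrightarrow> compactin X L \<and> (\<exists>U\<in>\<U>. L \<subseteq> U)" "\<Union>\<K> = K"
proof -
  have "\<exists>\<K>. finite \<K> \<and> (\<forall>L\<in>\<K>. compactin X L \<and> (\<exists>U\<in>\<U>. L \<subseteq> U)) \<and> \<Union>\<K> = K"
    using assms(2-5)
  proof (induction arbitrary: K rule: finite_induct)
    case empty
    then show ?case
      by auto
  next
    case (insert U \<U>)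
    have "openin X U" "openin X (\<Union>\<U>)" "K \<subseteq> U \<union> \<Union>\<U>"
      using insert.prems(1,3) by auto
    then obtain K1 K2 where
      K: "compactin X K1" "compactin X K2" "K1 \<subseteq> U" "K2 \<subseteq> \<Union>\<U>" "K = K1 \<union> K2"
      by (rule compactin_split_Un[OF assms(1) insert.prems(2)])
    have "\<And>V. V \<in> \<U> \<Longrightarrow> openin X V"
      using insert.prems(1) by blast
    then obtain \<K> where \<K>: "finite \<K>" "\<forall>L\<in>\<K>. compactin X L \<and> (\<exists>U\<in>\<U>. L \<subseteq> U)" "\<Union>\<K> = K2"
      using insert.IH[OF _ K(2,4)] by blast
    have "\<forall>L\<in>insert K1 \<K>. compactin X L \<and> (\<exists>V\<in>insert U \<U>. L \<subseteq> V)"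
      using K(1,3) \<K>(2) by blast
    moreover have "finite (insert K1 \<K>)" "\<Union>(insert K1 \<K>) = K"
      using \<K>(1,3) K(5) by simp_all
    ultimately show ?case
      by blast
  qed
  then show ?thesis
    using that by blast
qed

section \<open>Hereditarily disconnected spaces\<close>

lemma hereditarily_disconnected_subtopology:
  "hereditarily_disconnected X \<Longrightarrow> hereditarily_disconnected (subtopology X S)"
  by (auto simp: hereditarily_disconnected_def connectedin_subtopology)

lemma clopen_subtopology_trans:
  assumes "openin Y D" "closedin Y D" "openin (subtopology Y D) E" "closedin (subtopology Y D) E"
  shows "openin Y E \<and> closedin Y E"
  using assms openin_trans_full closedin_trans_full by blast

lemma hereditarily_disconnected_isolated_point:
  assumes hd: "hereditarily_disconnected Y" and ne: "topspace Y \<noteq> {}" and F: "finite F"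
    and meets: "\<And>D. openin Y D \<Longrightarrow> closedin Y D \<Longrightarrow> D \<noteq> {} \<Longrightarrow> D \<inter> F \<noteq> {}"
  obtains y where "openin Y {y}" "closedin Y {y}"
proof -
  define clopen where "clopen D \<longleftrightarrow> openin Y D \<and> closedin Y D \<and> D \<noteq> {}" for D
  have "clopen (topspace Y)"
    using ne by (simp add: clopen_def)
  then obtain D where D: "clopen D" and least: "\<And>E. clopen E \<Longrightarrow> card (D \<inter> F) \<le> card (E \<inter> F)"
    using ex_has_least_nat[where P = clopen and m = "\<lambda>D. card (D \<inter> F)"] by blast
  have Dsub: "D \<subseteq> topspace Y"
    using D openin_subset by (auto simp: clopen_def)
  have "connectedin Y D"
  proof (rule ccontr)
    assume "\<not> connectedin Y D"
    then obtain E where E: "openin (subtopology Y D) E" "closedin (subtopology Y D) E"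
      and "E \<noteq> {}" "E \<noteq> D"
      using Dsub by (auto simp: connectedin_def connected_space_clopen_in inf_absorb2)
    moreover have "openin (subtopology Y D) (D - E)" "closedin (subtopology Y D) (D - E)"
      using openin_diff[OF openin_topspace E(2)] closedin_diff[OF closedin_topspace E(1)] Dsub
      by (simp_all add: inf_absorb2)
    moreover have "E \<subseteq> D"
      using openin_subset[OF E(1)] Dsub by auto
    ultimately have "clopen E" "clopen (D - E)"
      using D clopen_subtopology_trans[of Y D] unfolding clopen_def by auto
    then have "E \<inter> F \<subset> D \<inter> F"
      using meets[of "D - E"] \<open>E \<subseteq> D\<close> unfolding clopen_def by blast
    then have "card (E \<inter> F) < card (D \<inter> F)"
      using F by (simp add: psubset_card_mono)
    with least[OF \<open>clopen E\<close>] show False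
      by simp
  qed
  then obtain y where "D = {y}"
    using hd D Dsub unfolding hereditarily_disconnected_def clopen_def by blast
  then show ?thesis
    using D that unfolding clopen_def by blast
qed

section \<open>Rigid compacta\<close>

definition rigid_above :: "'a topology \<Rightarrow> 'a set \<Rightarrow> bool" where
  "rigid_above X K \<longleftrightarrow>
     (\<forall>\<C>. \<C> \<subseteq> hyperspace_K X \<and> connectedin (vietoris X) \<C> \<and> K \<in> \<C> \<and> (\<forall>A\<in>\<C>. K \<subseteq> A)
          \<longrightarrow> \<C> = {K})"

lemma rigid_aboveI:
  assumes "\<And>\<C>. \<C> \<subseteq> hyperspace_K X \<Longrightarrow> connectedin (vietoris X) \<C> \<Longrightarrow> K \<in> \<C>
             \<Longrightarrow> (\<And>A. A \<in> \<C> \<Longrightarrow> K \<subseteq> A) \<Longrightarrow> \<C> = {K}"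
  shows "rigid_above X K"
  using assms unfolding rigid_above_def by blast

lemma rigid_aboveD:
  assumes "rigid_above X K" "\<C> \<subseteq> hyperspace_K X" "connectedin (vietoris X) \<C>" "K \<in> \<C>"
    "\<And>A. A \<in> \<C> \<Longrightarrow> K \<subseteq> A"
  shows "\<C> = {K}"
  using assms unfolding rigid_above_def by blast

locale connected_family_above =
  fixes X :: "'a topology" and \<C> :: "'a set set" and K :: "'a set"
  assumes Hausdorff: "Hausdorff_space X"
    and family: "\<C> \<subseteq> hyperspace_K X"
    and connected: "connectedin (vietoris X) \<C>"
    and bottom: "K \<in> \<C>"
    and bottom_subset: "\<And>A. A \<in> \<C> \<Longrightarrow> K \<subseteq> A"
begin

definition excess :: "'a set" where
  "excess = subtopology X (\<Union>\<C>) closure_of (\<Union>\<C> - K)"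

lemma member_compactin: "A \<in> \<C> \<Longrightarrow> compactin X A"
  using family by (auto simp: hyperspace_K_def)

lemma Union_subset_topspace: "\<Union>\<C> \<subseteq> topspace X"
  using member_compactin compactin_subset_topspace by blast

lemma closedin_bottom: "closedin X K"
  using compactin_imp_closedin[OF Hausdorff member_compactin[OF bottom]] .

lemma topspace_family: "topspace (subtopology (vietoris X) \<C>) = \<C>"
  using family by (simp add: inf_absorb2)

lemma connectedin_family: "connectedin (subtopology (vietoris X) \<C>) \<C>"
  using connected by (simp add: connectedin_subtopology)

lemma excess_subset: "excess \<subseteq> \<Union>\<C>"
  unfolding excess_def using closure_of_subset_topspace by fastforce

lemma Union_diff_bottom_subset_excess: "\<Union>\<C> - K \<subseteq> excess"
  unfolding excess_def using Union_subset_topspace by (intro closure_of_subset) auto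

lemma closedin_excess_imp_Int_closedin:
  assumes "closedin (subtopology X excess) D"
  obtains Z where "closedin X Z" "D = \<Union>\<C> \<inter> Z"
proof -
  have "closedin (subtopology X (\<Union>\<C>)) excess"
    unfolding excess_def by simp
  then have "closedin (subtopology X (\<Union>\<C>)) D"
    using closedin_trans_full assms excess_subset
    by (metis inf.absorb_iff2 subtopology_subtopology)
  then show ?thesis
    using that by (auto simp: closedin_subtopology)
qed

lemma compactin_Int_closedin_excess:
  assumes "closedin (subtopology X excess) D" and "A \<in> \<C>"
  shows "compactin X (A \<inter> D)"
proof -
  obtain Z where Z: "closedin X Z" "D = \<Union>\<C> \<inter> Z"
    using assms(1) by (rule closedin_excess_imp_Int_closedin)
  then have "A \<inter> D = A \<inter> Z"
    using assms(2) by blast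
  then show ?thesis
    using compact_Int_closedin[OF member_compactin[OF assms(2)] Z(1)] by simp
qed

lemma openin_family_restrict_upper:
  assumes D: "closedin (subtopology X excess) D" and U: "openin X U"
  shows "openin (subtopology (vietoris X) \<C>) {A \<in> \<C>. A \<inter> D \<subseteq> U}"
proof -
  obtain Z where Z: "closedin X Z" "D = \<Union>\<C> \<inter> Z"
    using D by (rule closedin_excess_imp_Int_closedin)
  have "{A \<in> \<C>. A \<inter> D \<subseteq> U} = vietoris_upper X (U \<union> (topspace X - Z)) \<inter> \<C>"
    using family Union_subset_topspace Z(2) unfolding vietoris_upper_def by blast
  moreover have "openin X (U \<union> (topspace X - Z))"
    using U Z(1) by blast
  ultimately show ?thesis
    by (simp add: openin_subtopology_Int openin_vietoris_upper)
qed

lemma openin_family_restrict_lower: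
  assumes D: "openin (subtopology X excess) D" and U: "openin X U"
  shows "openin (subtopology (vietoris X) \<C>) {A \<in> \<C>. A \<inter> D \<inter> U \<noteq> {}}"
proof (subst openin_subopen, intro ballI)
  fix A assume "A \<in> {A \<in> \<C>. A \<inter> D \<inter> U \<noteq> {}}"
  then obtain z where A: "A \<in> \<C>" and z: "z \<in> A" "z \<in> D" "z \<in> U"
    by blast
  show "\<exists>\<O>. openin (subtopology (vietoris X) \<C>) \<O> \<and> A \<in> \<O> \<and> \<O> \<subseteq> {A \<in> \<C>. A \<inter> D \<inter> U \<noteq> {}}"
  proof (cases "z \<in> K")
    case True
    then have "{A \<in> \<C>. A \<inter> D \<inter> U \<noteq> {}} = \<C>"
      using z bottom_subset by blast
    moreover have "openin (subtopology (vietoris X) \<C>) \<C>"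
      by (metis openin_topspace topspace_family)
    ultimately show ?thesis
      using A by blast
  next
    case False
    obtain Q where Q: "openin X Q" "D = Q \<inter> excess"
      using D by (auto simp: openin_subtopology)
    define V where "V = U \<inter> Q - K"
    have "V \<inter> \<Union>\<C> \<subseteq> D \<inter> U"
      using Union_diff_bottom_subset_excess Q(2) unfolding V_def by blast
    then have "vietoris_lower X V \<inter> \<C> \<subseteq> {A \<in> \<C>. A \<inter> D \<inter> U \<noteq> {}}"
      unfolding vietoris_lower_def by blast
    moreover have "A \<in> vietoris_lower X V \<inter> \<C>"
      using A z False Q family unfolding V_def vietoris_lower_def by blast
    moreover have "openin X V"
      unfolding V_def using U Q closedin_bottom by blast
    then have "openin (subtopology (vietoris X) \<C>) (vietoris_lower X V \<inter> \<C>)"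
      by (simp add: openin_subtopology_Int openin_vietoris_lower)
    ultimately show ?thesis
      by blast
  qed
qed

lemma openin_excess_subset: "openin (subtopology X excess) D \<Longrightarrow> D \<subseteq> excess"
  by (metis openin_subset le_inf_iff topspace_subtopology)

lemma clopen_excess_meets_bottom:
  assumes D: "openin (subtopology X excess) D" "closedin (subtopology X excess) D" "D \<noteq> {}"
  shows "D \<inter> K \<noteq> {}"
proof
  assume DK: "D \<inter> K = {}"
  define \<O> where "\<O> = {A \<in> \<C>. A \<inter> D \<subseteq> {}}"
  have open_\<O>: "openin (subtopology (vietoris X) \<C>) \<O>"
    unfolding \<O>_def by (rule openin_family_restrict_upper[OF D(2) openin_empty])
  have closed_\<O>: "closedin (subtopology (vietoris X) \<C>) \<O>"
    unfolding closedin_def topspace_family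
  proof
    show "\<O> \<subseteq> \<C>"
      unfolding \<O>_def by blast
    have "\<C> - \<O> = {A \<in> \<C>. A \<inter> D \<inter> topspace X \<noteq> {}}"
      unfolding \<O>_def using Union_subset_topspace by blast
    then show "openin (subtopology (vietoris X) \<C>) (\<C> - \<O>)"
      using openin_family_restrict_lower[OF D(1) openin_topspace] by simp
  qed
  have "\<C> \<subseteq> \<O> \<or> disjnt \<C> \<O>"
    using connectedin_clopen_cases[OF connectedin_family closed_\<O> open_\<O>] .
  moreover have "K \<in> \<O>"
    using bottom DK unfolding \<O>_def by blast
  moreover obtain A where "A \<in> \<C>" "A \<inter> D \<noteq> {}"
    using D(3) openin_excess_subset[OF D(1)] excess_subset by blast
  ultimately show False
    unfolding \<O>_def disjnt_def by blast
qed

lemma open_excess_not_subset_bottom: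
  assumes D: "openin (subtopology X excess) D" "D \<noteq> {}"
  shows "\<not> D \<subseteq> K"
proof
  assume "D \<subseteq> K"
  obtain Q where Q: "openin X Q" "D = Q \<inter> excess"
    using D(1) by (auto simp: openin_subtopology)
  have "Q \<inter> (\<Union>\<C> - K) \<subseteq> D"
    using Q(2) Union_diff_bottom_subset_excess by blast
  with \<open>D \<subseteq> K\<close> have "(Q \<inter> \<Union>\<C>) \<inter> (\<Union>\<C> - K) = {}"
    by blast
  then have "(Q \<inter> \<Union>\<C>) \<inter> excess = {}"
    unfolding excess_def using Q(1)
    by (simp add: openin_Int_closure_of_eq_empty openin_subtopology_Int)
  then show False
    using D(2) Q(2) excess_subset by blast
qed

lemma clopen_excess_subset_bottom:
  assumes D: "openin (subtopology X excess) D" "closedin (subtopology X excess) D" "D \<noteq> {}"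
    and rigid: "rigid_above X (K \<inter> D)"
  shows "D \<subseteq> K"
proof -
  have into: "A \<inter> D \<in> hyperspace_K X" if "A \<in> \<C>" for A
    using compactin_Int_closedin_excess[OF D(2) that] clopen_excess_meets_bottom[OF D]
      bottom_subset[OF that] unfolding hyperspace_K_def by blast
  have "continuous_map (subtopology (vietoris X) \<C>) (vietoris X) (\<lambda>A. A \<inter> D)"
  proof (rule continuous_map_into_vietoris, unfold topspace_family)
    show "\<And>A. A \<in> \<C> \<Longrightarrow> A \<inter> D \<in> hyperspace_K X"
      by (rule into)
    show "\<And>U. openin X U \<Longrightarrow> openin (subtopology (vietoris X) \<C>) {A \<in> \<C>. A \<inter> D \<subseteq> U}"
      by (rule openin_family_restrict_upper[OF D(2)])
    show "\<And>U. openin X U \<Longrightarrow> openin (subtopology (vietoris X) \<C>) {A \<in> \<C>. A \<inter> D \<inter> U \<noteq> {}}"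
      by (rule openin_family_restrict_lower[OF D(1)])
  qed
  then have "connectedin (vietoris X) ((\<lambda>A. A \<inter> D) ` \<C>)"
    using connectedin_continuous_map_image connectedin_family by blast
  then have image: "(\<lambda>A. A \<inter> D) ` \<C> = {K \<inter> D}"
  proof (rule rigid_aboveD[OF rigid, rotated])
    show "(\<lambda>A. A \<inter> D) ` \<C> \<subseteq> hyperspace_K X"
      using into by blast
    show "K \<inter> D \<in> (\<lambda>A. A \<inter> D) ` \<C>"
      using bottom by (rule imageI)
    show "\<And>B. B \<in> (\<lambda>A. A \<inter> D) ` \<C> \<Longrightarrow> K \<inter> D \<subseteq> B"
      using bottom_subset by blast
  qed
  have "A \<inter> D = K \<inter> D" if "A \<in> \<C>" for A
    using imageI[OF that, of "\<lambda>A. A \<inter> D"] by (simp add: image)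
  then show "D \<subseteq> K"
    using openin_excess_subset[OF D(1)] excess_subset by blast
qed

lemma family_eq_bottom:
  assumes hd: "hereditarily_disconnected X" and F: "finite F"
    and rigid: "\<And>K'. compactin X K' \<Longrightarrow> K' \<subseteq> K \<Longrightarrow> K' \<inter> F = {} \<Longrightarrow> K' \<noteq> {}
                  \<Longrightarrow> rigid_above X K'"
  shows "\<C> = {K}"
proof (cases "excess = {}")
  case True
  then have "\<Union>\<C> \<subseteq> K"
    using Union_diff_bottom_subset_excess by blast
  then show ?thesis
    using bottom bottom_subset by blast
next
  case False
  have "D \<inter> F \<noteq> {}"
    if D: "openin (subtopology X excess) D" "closedin (subtopology X excess) D" "D \<noteq> {}" for D
  proof
    assume "D \<inter> F = {}"
    then have "rigid_above X (K \<inter> D)"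
      using compactin_Int_closedin_excess[OF D(2) bottom] clopen_excess_meets_bottom[OF D]
      by (intro rigid) blast+
    then show False
      using clopen_excess_subset_bottom[OF D] open_excess_not_subset_bottom[OF D(1,3)] by blast
  qed
  moreover have "topspace (subtopology X excess) \<noteq> {}"
    using False excess_subset Union_subset_topspace by auto
  ultimately obtain y where y: "openin (subtopology X excess) {y}" "closedin (subtopology X excess) {y}"
    using hereditarily_disconnected_isolated_point[OF hereditarily_disconnected_subtopology[OF hd] _ F]
    by blast
  have "{y} \<inter> K \<noteq> {}" "\<not> {y} \<subseteq> K"
    using clopen_excess_meets_bottom[OF y] open_excess_not_subset_bottom[OF y(1)] by simp_all
  then show ?thesis
    by simp
qed

end

lemma rigid_above_if_finite_exception:
  assumes "Hausdorff_space X" "hereditarily_disconnected X" "finite F"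
    and "\<And>K'. compactin X K' \<Longrightarrow> K' \<subseteq> K \<Longrightarrow> K' \<inter> F = {} \<Longrightarrow> K' \<noteq> {} \<Longrightarrow> rigid_above X K'"
  shows "rigid_above X K"
proof (rule rigid_aboveI)
  fix \<C> assume "\<C> \<subseteq> hyperspace_K X" "connectedin (vietoris X) \<C>" "K \<in> \<C>"
    "\<And>A. A \<in> \<C> \<Longrightarrow> K \<subseteq> A"
  then interpret connected_family_above X \<C> K
    using assms(1) by unfold_locales
  show "\<C> = {K}"
    by (rule family_eq_bottom[OF assms(2,3,4)])
qed

section \<open>Peelable compacta\<close>

inductive peelable :: "'a topology \<Rightarrow> 'a set \<Rightarrow> bool" for X where
  peelableI: "finite F \<Longrightarrow>
    (\<And>K'. compactin X K' \<Longrightarrow> K' \<subseteq> K \<Longrightarrow> K' \<inter> F = {} \<Longrightarrow> K' \<noteq> {} \<Longrightarrow> peelable X K')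
    \<Longrightarrow> peelable X K"

lemma peelable_imp_rigid_above:
  assumes "Hausdorff_space X" "hereditarily_disconnected X" "peelable X K"
  shows "rigid_above X K"
  using assms(3)
proof (induction rule: peelable.induct)
  case (peelableI F K)
  show ?case
    by (rule rigid_above_if_finite_exception[OF assms(1,2) peelableI.hyps(1)])
      (use peelableI.IH in blast)
qed

lemma peelable_empty: "peelable X {}"
  by (rule peelableI[of "{}"]) auto

lemma peelable_Un:
  assumes "Hausdorff_space X"
    and "peelable X K1" "compactin X K1" "peelable X K2" "compactin X K2"
  shows "peelable X (K1 \<union> K2)"
  using assms(2-5)
proof (induction arbitrary: K2 rule: peelable.induct)
  case (peelableI F1 K1)
  obtain F2 where F2: "finite F2"
    and peel2: "\<And>K'. compactin X K' \<Longrightarrow> K' \<subseteq> K2 \<Longrightarrow> K' \<inter> F2 = {} \<Longrightarrow> K' \<noteq> {} \<Longrightarrow> peelable X K'"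
    using peelableI.prems(2) by (cases rule: peelable.cases) blast
  show ?case
  proof (rule peelable.peelableI[of "F1 \<union> F2"])
    show "finite (F1 \<union> F2)"
      using peelableI.hyps F2 by simp
  next
    fix K' assume K': "compactin X K'" "K' \<subseteq> K1 \<union> K2" "K' \<inter> (F1 \<union> F2) = {}" "K' \<noteq> {}"
    have compact1: "compactin X (K' \<inter> K1)" and compact2: "compactin X (K' \<inter> K2)"
      using compactin_Int[OF assms(1) K'(1)] peelableI.prems by blast+
    have peelable2: "peelable X (K' \<inter> K2)"
      using peel2[OF compact2] peelable_empty K'(3) by (cases "K' \<inter> K2 = {}") auto
    have "K' = (K' \<inter> K1) \<union> (K' \<inter> K2)"
      using K'(2) by blast
    moreover have "peelable X ((K' \<inter> K1) \<union> (K' \<inter> K2))" if "K' \<inter> K1 \<noteq> {}"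
      using peelableI.IH[OF compact1 _ _ that compact1 peelable2 compact2] K'(3) by blast
    ultimately show "peelable X K'"
      using peelable2 by (cases "K' \<inter> K1 = {}") auto
  qed
qed

lemma peelable_Union:
  assumes "Hausdorff_space X" "finite \<K>" "\<And>L. L \<in> \<K> \<Longrightarrow> compactin X L \<and> peelable X L"
  shows "peelable X (\<Union>\<K>)"
  using assms(2,3)
proof (induction rule: finite_induct)
  case empty
  then show ?case
    by (simp add: peelable_empty)
next
  case (insert L \<K>)
  have "compactin X (\<Union>\<K>)"
    using insert.hyps(1) insert.prems by (intro compactin_Union) auto
  then show ?case
    using peelable_Un[OF assms(1)] insert.IH insert.prems by simp
qed

lemma scattered_in_subset: "scattered_in X T \<Longrightarrow> A \<subseteq> T \<Longrightarrow> scattered_in X A"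
  unfolding scattered_in_def by blast

lemma scattered_imp_peelable:
  assumes "Hausdorff_space X" "compactin X T" "scattered_in X T"
  shows "peelable X T"
proof -
  define good where
    "good U \<longleftrightarrow> openin X U \<and> (\<forall>K. compactin X K \<and> K \<subseteq> T \<inter> U \<longrightarrow> peelable X K)" for U
  define W where "W = T \<inter> \<Union>(Collect good)"
  have W_peelable: "peelable X K" if K: "compactin X K" "K \<subseteq> W" for K
  proof -
    have "\<forall>U\<in>Collect good. openin X U" "K \<subseteq> \<Union>(Collect good)"
      using K(2) unfolding good_def W_def by auto
    then obtain \<F> where \<F>: "finite \<F>" "\<F> \<subseteq> Collect good" "K \<subseteq> \<Union>\<F>"
      using K(1) unfolding compactin_def by meson
    have open_\<F>: "\<And>U. U \<in> \<F> \<Longrightarrow> openin X U"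
      using \<F>(2) unfolding good_def by blast
    obtain \<K> where \<K>: "finite \<K>" "\<And>L. L \<in> \<K> \<Longrightarrow> compactin X L \<and> (\<exists>U\<in>\<F>. L \<subseteq> U)" "\<Union>\<K> = K"
      using compactin_split_finite_open_cover[OF assms(1) \<F>(1) open_\<F> K(1) \<F>(3)] by blast
    have "compactin X L \<and> peelable X L" if L: "L \<in> \<K>" for L
    proof -
      obtain U where U: "U \<in> \<F>" "L \<subseteq> U" and "compactin X L"
        using \<K>(2)[OF L] by blast
      moreover have "L \<subseteq> T"
        using L \<K>(3) K(2) unfolding W_def by blast
      moreover have "good U"
        using U(1) \<F>(2) by blast
      ultimately show ?thesis
        unfolding good_def by blast
    qed
    then show ?thesis
      using peelable_Union[OF assms(1) \<K>(1)] \<K>(3) by blast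
  qed
  \<comment> \<open>an isolated point of \<open>T - W\<close> would lie in W: peeling it off leaves compacta inside W\<close>
  have "T \<subseteq> W"
  proof (rule ccontr)
    assume "\<not> T \<subseteq> W"
    then have "T - W \<subseteq> T" "T - W \<noteq> {}"
      by blast+
    then obtain z where z: "z \<in> T - W" "openin (subtopology X (T - W)) {z}"
      using assms(3) unfolding scattered_in_def by blast
    then obtain U where U: "openin X U" "{z} = U \<inter> (T - W)"
      by (auto simp: openin_subtopology)
    have "peelable X K" if K: "compactin X K" "K \<subseteq> T \<inter> U" for K
    proof (rule peelableI[of "{z}"])
      fix K' assume "compactin X K'" "K' \<subseteq> K" "K' \<inter> {z} = {}"
      moreover have "K' \<subseteq> W"
        using calculation(2,3) K(2) U(2) by blast
      ultimately show "peelable X K'"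
        using W_peelable by blast
    qed simp
    then have "good U"
      unfolding good_def using U(1) by blast
    then show False
      using z(1) U(2) unfolding W_def by blast
  qed
  then show ?thesis
    using W_peelable assms(2) by blast
qed

lemma connected_family_subset_scattered_member:
  assumes "Hausdorff_space X" "hereditarily_disconnected X"
    and \<C>: "\<C> \<subseteq> hyperspace_K X" "connectedin (vietoris X) \<C>"
    and T: "T \<in> \<C>" "scattered_in X T" and A: "A \<in> \<C>"
  shows "A \<subseteq> T"
proof -
  have "compactin X T"
    using \<C>(1) T(1) by (auto simp: hyperspace_K_def)
  then have "rigid_above X T" "connectedin (vietoris X) ((\<lambda>A. A \<union> T) ` \<C>)"
    using assms(1,2) T(2) \<C>(2) scattered_imp_peelable peelable_imp_rigid_above
      connectedin_continuous_map_image continuous_map_vietoris_Un by blast+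
  then have "(\<lambda>A. A \<union> T) ` \<C> = {T}"
  proof (intro rigid_aboveD)
    show "(\<lambda>A. A \<union> T) ` \<C> \<subseteq> hyperspace_K X"
      using \<C>(1) \<open>compactin X T\<close> by (auto simp: hyperspace_K_def compactin_Un)
    show "T \<in> (\<lambda>A. A \<union> T) ` \<C>"
      using T(1) by force
  qed auto
  then show ?thesis
    using imageI[OF A, of "\<lambda>A. A \<union> T"] by auto
qed

theorem theorem5p9:
  fixes X :: "'a topology" and \<C> :: "'a set set"
  assumes "Hausdorff_space X"
    and "hereditarily_disconnected X"
    and "\<C> \<subseteq> hyperspace_K X"
    and "connectedin (vietoris X) \<C>"
    and "\<exists>T\<in>\<C>. scattered_in X T"
  shows "card \<C> = 1"
proof -
  obtain T where T: "T \<in> \<C>" "scattered_in X T"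
    using assms(5) by blast
  have "A = T" if "A \<in> \<C>" for A
  proof -
    have "A \<subseteq> T"
      using connected_family_subset_scattered_member[OF assms(1-4) T that] .
    moreover have "T \<subseteq> A"
      using connected_family_subset_scattered_member[OF assms(1-4) that _ T(1)]
        scattered_in_subset[OF T(2) \<open>A \<subseteq> T\<close>] by blast
    ultimately show ?thesis
      by blast
  qed
  then have "\<C> = {T}"
    using T(1) by blast
  then show ?thesis
    by simp
qed

end
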